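(* In the setting of the 2-node sliced contraction (all $m_i=2$) with all sliced index dimensions equal, $L_i=L>2$ for $i=1,\dots,n$, the $f$-resilient number $f+2L^n-1$ is achievable (via the encoding $\tilde A^{(i,1)}(x)=\sum_{s=1}^{L}A^{(i,1)}_{s}x^{(s-1)L^{i-1}}$, $\tilde A^{(i,2)}(x)=\sum_{s=1}^{L}A^{(i,2)}_{s}x^{(L-s)L^{i-1}}$, each worker evaluating $\Phi$ on the encoded tensors at its own distinct point $x$), and the gain compared to naive replication is $\Delta=(L^n-1)(f-1)$.
   Context: Setting (sliced parallel tensor network contraction). A tensor network is contracted in parallel by "slicing" $n$ of its closed indices: index $i$ has dimension $L_i$ and is shared by $m_i$ tensors (an "$m_i$-node index"), and the sliced indices are pairwise non-adjacent, i.e. no tensor carries two sliced indices. Fixing the value $s_i\in\{1,\dots,L_i\}$ of each sliced index turns each of the $m_i$ tensors attached to index $i$ into a sliced subtensor $A^{(i,j)}_{s_i}\in V_{i,j}$ ($j=1,\dots,m_i$), and contracting the rest of the network (all tensors not attached to sliced indices, together with all non-sliced indices) is a multilinear map $\Phi:\prod_{i=1}^n\prod_{j=1}^{m_i}V_{i,j}\to W$ over an infinite field $\mathbb{F}$. The sliced partition for $(s_1,\dots,s_n)$ is $\sigma_{s_1\cdots s_n}=\Phi(A^{(1,1)}_{s_1},\dots,A^{(1,m_1)}_{s_1},\dots,A^{(n,1)}_{s_n},\dots,A^{(n,m_n)}_{s_n})$, and the desired output is $\sigma_{\mathrm{final}}=\sum_{s_1,\dots,s_n}\sigma_{s_1\cdots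 s_n}$; there are $N=\prod_i L_i$ sliced partitions. Computing model: a master distributes work to workers; each worker evaluates $\Phi$ once on one input from each $V_{i,j}$ (so it has the same computational cost as computing one sliced partition) and returns the result; up to $f$ workers may fail, and nothing is recovered from a failed worker. The $f$-resilient number of a scheme is the total number of workers required so that $\sigma_{\mathrm{final}}$ can be retrieved despite any $f$ worker failures. Naive replication (each of the $N$ sliced partitions computed by $f+1$ workers) has $f$-resilient number $N(f+1)$; the gain of a scheme is $N(f+1)$ minus its $f$-resilient number. *)

theory Defs
  imports Complex_Main "HOL-Library.FuncSet"
begin

text \<open>Indices are 0-based: sliced index i ranges over {0..<n}, the two tensors
attached to a 2-node index are j = 0, 1, and the value s of a sliced index ranges
over {0..<L}.  All spaces V_(i,j) are modelled by one vector space 'v over the field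
'a (scalar multiplication sV); the output space W is 'w (scalar multiplication sW).
An argument tuple of Phi is a function  nat => nat => 'v ; only the slots i < n,
j < 2 are meaningful.\<close>

definition slot_upd :: "(nat \<Rightarrow> nat \<Rightarrow> 'v) \<Rightarrow> nat \<Rightarrow> nat \<Rightarrow> 'v \<Rightarrow> (nat \<Rightarrow> nat \<Rightarrow> 'v)" where
  "slot_upd args i j u = args(i := (args i)(j := u))"

definition multilinear2 ::
  "('a::field \<Rightarrow> 'v::ab_group_add \<Rightarrow> 'v) \<Rightarrow> ('a \<Rightarrow> 'w::ab_group_add \<Rightarrow> 'w) \<Rightarrow> nat
    \<Rightarrow> ((nat \<Rightarrow> nat \<Rightarrow> 'v) \<Rightarrow> 'w) \<Rightarrow> bool" where
  "multilinear2 sV sW n \<Phi> \<longleftrightarrow>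
     (\<forall>i<n. \<forall>j<2. \<forall>args. Vector_Spaces.linear sV sW (\<lambda>u. \<Phi> (slot_upd args i j u)))"

definition sliced_args ::
  "nat \<Rightarrow> (nat \<Rightarrow> nat \<Rightarrow> nat \<Rightarrow> 'v::zero) \<Rightarrow> (nat \<Rightarrow> nat) \<Rightarrow> (nat \<Rightarrow> nat \<Rightarrow> 'v)" where
  "sliced_args n A s = (\<lambda>i j. if i < n \<and> j < 2 then A i j (s i) else 0)"

definition sigma_final ::
  "nat \<Rightarrow> nat \<Rightarrow> ((nat \<Rightarrow> nat \<Rightarrow> 'v::zero) \<Rightarrow> 'w::comm_monoid_add)
    \<Rightarrow> (nat \<Rightarrow> nat \<Rightarrow> nat \<Rightarrow> 'v) \<Rightarrow> 'w" where
  "sigma_final n L \<Phi> A = (\<Sum>s \<in> PiE {..<n} (\<lambda>_. {..<L}). \<Phi> (sliced_args n A s))"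

definition encode ::
  "('a::field \<Rightarrow> 'v::ab_group_add \<Rightarrow> 'v) \<Rightarrow> nat \<Rightarrow> nat
    \<Rightarrow> (nat \<Rightarrow> nat \<Rightarrow> nat \<Rightarrow> 'v) \<Rightarrow> 'a \<Rightarrow> (nat \<Rightarrow> nat \<Rightarrow> 'v)" where
  "encode sV n L A x = (\<lambda>i j.
     if i < n \<and> j = 0 then (\<Sum>s<L. sV (x ^ (s * L ^ i)) (A i 0 s))
     else if i < n \<and> j = 1 then (\<Sum>s<L. sV (x ^ ((L - 1 - s) * L ^ i)) (A i 1 s))
     else 0)"

text \<open>Gain of a scheme with f-resilient number R, compared with naive replication
of N sliced partitions (N (f+1) workers).\<close>
definition gain :: "nat \<Rightarrow> nat \<Rightarrow> nat \<Rightarrow> int" where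
  "gain N f R = int N * (int f + 1) - int R"

end

theory Submission
  imports Defs "HOL-Computational_Algebra.Polynomial"
begin

text \<open>Multilinearity turns \<open>\<Phi>\<close> of the encoded tensors at a point \<open>y\<close> into a polynomial
in \<open>y\<close> with coefficients in \<open>W\<close>: the term belonging to a choice \<open>t\<close> of slice values for
all \<open>2n\<close> slots has degree \<open>\<Sum>i<n. (t(i,0) + L - 1 - t(i,1)) L^i \<le> 2 (L^n - 1)\<close>.
Read in base \<open>L\<close>, this degree differs from \<open>L^n - 1\<close> by a number with digits
\<open>t(i,0) - t(i,1) \<in> (-L, L)\<close>, so it equals \<open>L^n - 1\<close> exactly when \<open>t(i,0) = t(i,1)\<close> for
all \<open>i\<close>, i.e. on the sliced partitions: \<open>\<sigma>_final\<close> is the coefficient of \<open>y^(L^n - 1)\<close>.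
Any \<open>2L^n - 1\<close> distinct evaluation points determine such a polynomial, so after at most
\<open>f\<close> failures among \<open>f + 2L^n - 1\<close> workers that coefficient is still a fixed linear
combination of the surviving results, with weights read off the Lagrange basis.\<close>

definition lagrange_basis :: "('i \<Rightarrow> 'a::field) \<Rightarrow> 'i set \<Rightarrow> 'i \<Rightarrow> 'a poly" where
  "lagrange_basis x S k =
     smult (inverse (\<Prod>j\<in>S - {k}. x k - x j)) (\<Prod>j\<in>S - {k}. [:- x j, 1:])"

lemma degree_lagrange_basis:
  assumes "finite S" "k \<in> S"
  shows "degree (lagrange_basis x S k) < card S"
proof -
  have "degree (lagrange_basis x S k) \<le> (\<Sum>j\<in>S - {k}. degree [:- x j, 1:])"
    unfolding lagrange_basis_def
    by (rule order_trans[OF degree_smult_le order_trans[OF degree_prod_sum_le]])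
       (use assms in \<open>simp_all add: o_def\<close>)
  also have "\<dots> < card S"
    using assms card_gt_0_iff[of S] by fastforce
  finally show ?thesis .
qed

lemma poly_lagrange_basis:
  assumes "finite S" "inj_on x S" "k \<in> S" "m \<in> S"
  shows "poly (lagrange_basis x S k) (x m) = (if m = k then 1 else 0)"
proof (cases "m = k")
  case True
  have "(\<Prod>j\<in>S - {k}. x k - x j) \<noteq> 0"
    using assms by (auto dest: inj_onD)
  then show ?thesis
    using True by (simp add: lagrange_basis_def poly_prod)
next
  case False
  then show ?thesis
    using assms by (auto simp: lagrange_basis_def poly_prod prod_zero_iff)
qed

lemma lagrange_interpolation:
  fixes p :: "'a::field poly"
  assumes "finite S" "inj_on x S" "degree p < card S"
  shows "p = (\<Sum>k\<in>S. smult (poly p (x k)) (lagrange_basis x S k))"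
proof (rule poly_eqI_degree[of "x ` S"])
  fix y assume "y \<in> x ` S"
  then obtain m where "m \<in> S" "y = x m" by blast
  then show "poly p y = poly (\<Sum>k\<in>S. smult (poly p (x k)) (lagrange_basis x S k)) y"
    using assms(1,2) by (simp add: poly_sum poly_lagrange_basis if_distrib cong: if_cong)
next
  show "degree p < card (x ` S)"
    using assms by (simp add: card_image)
  show "degree (\<Sum>k\<in>S. smult (poly p (x k)) (lagrange_basis x S k)) < card (x ` S)"
    using assms degree_lagrange_basis[OF assms(1)]
    by (auto simp: card_image intro!: degree_sum_less order.strict_trans1[OF degree_smult_le])
qed

lemma lagrange_coeff_power_sum:
  fixes x :: "'i \<Rightarrow> 'a::field"
  assumes "finite S" "inj_on x S" "d < card S"
  shows "(\<Sum>k\<in>S. coeff (lagrange_basis x S k) D * x k ^ d) = (if d = D then 1 else 0)"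
proof -
  have "monom 1 d = (\<Sum>k\<in>S. smult (x k ^ d) (lagrange_basis x S k))"
    using lagrange_interpolation[OF assms(1,2), of "monom 1 d"] assms(3)
    by (simp add: degree_monom_eq poly_monom)
  then have "coeff (monom 1 d) D = (\<Sum>k\<in>S. x k ^ d * coeff (lagrange_basis x S k) D)"
    by (simp add: coeff_sum)
  then show ?thesis
    by (simp add: coeff_monom mult.commute)
qed

lemma lagrange_extract_coeff:
  fixes x :: "'i \<Rightarrow> 'a::field" and scale :: "'a \<Rightarrow> 'w::ab_group_add \<Rightarrow> 'w"
  assumes "vector_space scale" "finite S" "inj_on x S" "finite T" "\<And>t. t \<in> T \<Longrightarrow> e t < card S"
  shows "(\<Sum>k\<in>S. scale (coeff (lagrange_basis x S k) D) (\<Sum>t\<in>T. scale (x k ^ e t) (w t)))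
           = (\<Sum>t\<in>{t\<in>T. e t = D}. w t)"
proof -
  interpret vector_space scale by fact
  let ?c = "\<lambda>k. coeff (lagrange_basis x S k) D"
  have "(\<Sum>k\<in>S. scale (?c k) (\<Sum>t\<in>T. scale (x k ^ e t) (w t)))
          = (\<Sum>t\<in>T. scale (\<Sum>k\<in>S. ?c k * x k ^ e t) (w t))"
    by (simp add: scale_sum_right scale_sum_left sum.swap[of _ S])
  also have "\<dots> = (\<Sum>t\<in>T. if e t = D then w t else 0)"
    using assms(2,3,5) by (intro sum.cong) (simp_all add: lagrange_coeff_power_sum)
  also have "\<dots> = (\<Sum>t\<in>{t\<in>T. e t = D}. w t)"
    using assms(4) by (simp add: sum.inter_filter)
  finally show ?thesis .
qed

definition fill_slots :: "(nat \<Rightarrow> nat \<Rightarrow> 'v) \<Rightarrow> (nat \<times> nat) set \<Rightarrow> (nat \<times> nat \<Rightarrow> 'v) \<Rightarrow> nat \<Rightarrow> nat \<Rightarrow> 'v" where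
  "fill_slots args P g = (\<lambda>i j. if (i, j) \<in> P then g (i, j) else args i j)"

lemma sum_PiE_insert:
  assumes "p \<notin> P" "finite P" "finite S"
  shows "(\<Sum>t\<in>PiE (insert p P) (\<lambda>_. S). g t) = (\<Sum>t\<in>PiE P (\<lambda>_. S). \<Sum>s\<in>S. g (t(p := s)))"
proof -
  have "(\<Sum>t\<in>PiE (insert p P) (\<lambda>_. S). g t) = (\<Sum>(s, t)\<in>S \<times> PiE P (\<lambda>_. S). g (t(p := s)))"
    unfolding PiE_insert_eq
    by (subst sum.reindex[OF inj_combinator[OF assms(1)]]) (simp add: case_prod_beta o_def)
  also have "\<dots> = (\<Sum>s\<in>S. \<Sum>t\<in>PiE P (\<lambda>_. S). g (t(p := s)))"
    by (simp add: sum.cartesian_product)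
  also have "\<dots> = (\<Sum>t\<in>PiE P (\<lambda>_. S). \<Sum>s\<in>S. g (t(p := s)))"
    by (rule sum.swap)
  finally show ?thesis .
qed

lemma multilinear_expansion:
  fixes sV :: "'a::field \<Rightarrow> 'v::ab_group_add \<Rightarrow> 'v" and sW :: "'a \<Rightarrow> 'w::ab_group_add \<Rightarrow> 'w"
  assumes "vector_space sW" "finite P" "finite S"
    and lin: "\<And>args i j. (i, j) \<in> P \<Longrightarrow> Vector_Spaces.linear sV sW (\<lambda>u. \<Phi> (slot_upd args i j u))"
  shows "\<Phi> (fill_slots args P (\<lambda>p. \<Sum>s\<in>S. sV (c p s) (a p s)))
       = (\<Sum>t\<in>PiE P (\<lambda>_. S). sW (\<Prod>p\<in>P. c p (t p)) (\<Phi> (fill_slots args P (\<lambda>p. a p (t p)))))"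
  using assms(2) lin
proof (induction P arbitrary: args rule: finite_induct)
  case empty
  interpret W: vector_space sW by fact
  show ?case by (simp add: fill_slots_def)
next
  case (insert p P)
  interpret W: vector_space sW by fact
  obtain i j where p: "p = (i, j)" by fastforce
  define G where "G q = (\<Sum>s\<in>S. sV (c q s) (a q s))" for q
  have linp: "module_hom sV sW (\<lambda>u. \<Phi> (slot_upd X i j u))" for X
    using insert.prems[of i j X] by (simp add: p linear_iff_module_hom)
  have fill_insert: "fill_slots X (insert p P) h = slot_upd (fill_slots X P h) i j (h p)" for X h
    using insert.hyps(2) by (auto simp: fill_slots_def slot_upd_def p fun_eq_iff)
  have fill_upd: "fill_slots (slot_upd X i j v) P h = slot_upd (fill_slots X P h) i j v" for X v h
    using insert.hyps(2) by (auto simp: fill_slots_def slot_upd_def p fun_eq_iff)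
  have upd_term: "slot_upd (fill_slots args P (\<lambda>q. a q (t q))) i j (a p s)
                    = fill_slots args (insert p P) (\<lambda>q. a q ((t(p := s)) q))" for t s
    using insert.hyps(2) by (auto simp: fill_slots_def slot_upd_def p fun_eq_iff)
  have prod_upd: "(\<Prod>q\<in>insert p P. c q ((t(p := s)) q)) = c p s * (\<Prod>q\<in>P. c q (t q))" for t s
    using insert.hyps by (auto intro!: prod.cong)
  have "\<Phi> (fill_slots args (insert p P) G) = \<Phi> (fill_slots (slot_upd args i j (G p)) P G)"
    by (simp add: fill_insert fill_upd)
  also have "\<dots> = (\<Sum>t\<in>PiE P (\<lambda>_. S). sW (\<Prod>q\<in>P. c q (t q))
                     (\<Phi> (slot_upd (fill_slots args P (\<lambda>q. a q (t q))) i j (G p))))"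
    using insert.IH[of "slot_upd args i j (G p)"] insert.prems unfolding G_def
    by (simp add: fill_upd)
  also have "\<dots> = (\<Sum>t\<in>PiE P (\<lambda>_. S). \<Sum>s\<in>S. sW (\<Prod>q\<in>insert p P. c q ((t(p := s)) q))
                     (\<Phi> (fill_slots args (insert p P) (\<lambda>q. a q ((t(p := s)) q)))))"
    unfolding G_def module_hom.sum[OF linp] module_hom.scale[OF linp] upd_term prod_upd
    by (simp add: W.scale_sum_right mult.commute)
  also have "\<dots> = (\<Sum>t\<in>PiE (insert p P) (\<lambda>_. S). sW (\<Prod>q\<in>insert p P. c q (t q))
                     (\<Phi> (fill_slots args (insert p P) (\<lambda>q. a q (t q)))))"
    by (rule sum_PiE_insert[symmetric]) (use insert.hyps assms(3) in auto)
  finally show ?case unfolding G_def .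
qed

lemma base_digits_eq_zero:
  fixes d :: "nat \<Rightarrow> int" and b :: int
  assumes "\<And>i. i < n \<Longrightarrow> \<bar>d i\<bar> < b" "(\<Sum>i<n. d i * b ^ i) = 0" "i < n"
  shows "d i = 0"
  using assms
proof (induction n arbitrary: d i)
  case 0
  then show ?case by simp
next
  case (Suc n)
  define r where "r = (\<Sum>i<n. d (Suc i) * b ^ i)"
  have "b > 0"
    using Suc.prems(1)[of 0] by linarith
  have "(\<Sum>i<Suc n. d i * b ^ i) = d 0 + b * r"
    unfolding r_def sum.lessThan_Suc_shift by (simp add: sum_distrib_left mult_ac)
  then have d0_r: "d 0 + b * r = 0"
    using Suc.prems(2) by simp
  then have "b dvd d 0"
    by (intro dvdI[of _ _ "- r"]) linarith
  have d0: "d 0 = 0"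
  proof (rule ccontr)
    assume "d 0 \<noteq> 0"
    then have "\<bar>b\<bar> \<le> \<bar>d 0\<bar>"
      using \<open>b dvd d 0\<close> by (rule dvd_imp_le_int)
    then show False
      using Suc.prems(1)[of 0] by simp
  qed
  with d0_r \<open>b > 0\<close> have "(\<Sum>i<n. d (Suc i) * b ^ i) = 0"
    unfolding r_def by simp
  moreover have "\<bar>d (Suc i)\<bar> < b" if "i < n" for i
    using Suc.prems(1) that by simp
  ultimately have d_Suc: "d (Suc k) = 0" if "k < n" for k
    using Suc.IH[of "\<lambda>i. d (Suc i)" k] that by blast
  show ?case
    using Suc.prems(3) d0 d_Suc by (cases i) simp_all
qed

definition sliced_slots :: "nat \<Rightarrow> (nat \<times> nat) set" where
  "sliced_slots n = {..<n} \<times> {..<2}"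

(* A mixed slice chooses the value of each sliced index separately for its two tensors;
   the sliced partitions are the diagonal ones, t (i, 0) = t (i, 1). *)
definition mixed_slices :: "nat \<Rightarrow> nat \<Rightarrow> (nat \<times> nat \<Rightarrow> nat) set" where
  "mixed_slices n L = PiE (sliced_slots n) (\<lambda>_. {..<L})"

definition slot_exponent :: "nat \<Rightarrow> nat \<times> nat \<Rightarrow> nat \<Rightarrow> nat" where
  "slot_exponent L p s = (if snd p = 0 then s * L ^ fst p else (L - 1 - s) * L ^ fst p)"

definition slice_degree :: "nat \<Rightarrow> nat \<Rightarrow> (nat \<times> nat \<Rightarrow> nat) \<Rightarrow> nat" where
  "slice_degree n L t = (\<Sum>p\<in>sliced_slots n. slot_exponent L p (t p))"

definition mixed_slice_args ::
  "nat \<Rightarrow> (nat \<Rightarrow> nat \<Rightarrow> nat \<Rightarrow> 'v::zero) \<Rightarrow> (nat \<times> nat \<Rightarrow> nat) \<Rightarrow> nat \<Rightarrow> nat \<Rightarrow> 'v" where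
  "mixed_slice_args n A t = (\<lambda>i j. if i < n \<and> j < 2 then A i j (t (i, j)) else 0)"

lemma mixed_slices_less:
  "t \<in> mixed_slices n L \<Longrightarrow> i < n \<Longrightarrow> j < 2 \<Longrightarrow> t (i, j) < L"
  by (auto simp: mixed_slices_def sliced_slots_def PiE_iff)

lemma slice_degree_int:
  assumes "t \<in> mixed_slices n L"
  shows "int (slice_degree n L t)
           = (int L ^ n - 1) + (\<Sum>i<n. (int (t (i, 0)) - int (t (i, 1))) * int L ^ i)"
proof -
  have "slice_degree n L t = (\<Sum>i<n. \<Sum>j<2. slot_exponent L (i, j) (t (i, j)))"
    unfolding slice_degree_def sliced_slots_def by (simp add: sum.cartesian_product)
  also have "\<dots> = (\<Sum>i<n. (t (i, 0) + (L - 1 - t (i, 1))) * L ^ i)"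
    by (simp add: numeral_2_eq_2 slot_exponent_def add_mult_distrib)
  finally have "int (slice_degree n L t) = (\<Sum>i<n. int (t (i, 0) + (L - 1 - t (i, 1))) * int L ^ i)"
    by simp
  also have "\<dots> = (\<Sum>i<n. ((int L - 1) + (int (t (i, 0)) - int (t (i, 1)))) * int L ^ i)"
  proof (rule sum.cong)
    fix i assume "i \<in> {..<n}"
    then have "t (i, 1) < L"
      using mixed_slices_less[OF assms] by simp
    then show "int (t (i, 0) + (L - 1 - t (i, 1))) * int L ^ i
                 = ((int L - 1) + (int (t (i, 0)) - int (t (i, 1)))) * int L ^ i"
      by (simp add: of_nat_diff)
  qed simp
  also have "\<dots> = (int L - 1) * (\<Sum>i<n. int L ^ i) + (\<Sum>i<n. (int (t (i, 0)) - int (t (i, 1))) * int L ^ i)"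
    by (simp add: distrib_right sum.distrib sum_distrib_left)
  finally show ?thesis
    by (simp add: power_diff_1_eq)
qed

lemma slice_degree_le:
  assumes "t \<in> mixed_slices n L" "L > 0"
  shows "slice_degree n L t \<le> 2 * (L ^ n - 1)"
proof -
  have "(\<Sum>i<n. (int (t (i, 0)) - int (t (i, 1))) * int L ^ i) \<le> (\<Sum>i<n. (int L - 1) * int L ^ i)"
  proof (intro sum_mono mult_right_mono)
    fix i assume "i \<in> {..<n}"
    then show "int (t (i, 0)) - int (t (i, 1)) \<le> int L - 1"
      using mixed_slices_less[OF assms(1), of i 0] by simp
  qed simp
  also have "\<dots> = int L ^ n - 1"
    by (simp add: power_diff_1_eq sum_distrib_left)
  finally have digits_le: "(\<Sum>i<n. (int (t (i, 0)) - int (t (i, 1))) * int L ^ i) \<le> int L ^ n - 1" .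
  have bound_int: "int (2 * (L ^ n - 1)) = 2 * (int L ^ n - 1)"
    using assms(2) by (simp add: of_nat_diff)
  have "int (slice_degree n L t) \<le> int (2 * (L ^ n - 1))"
    unfolding slice_degree_int[OF assms(1)] bound_int using add_left_mono[OF digits_le, of "int L ^ n - 1"] by simp
  then show ?thesis
    by (rule of_nat_le_iff[THEN iffD1])
qed

lemma slice_degree_eq_iff:
  assumes "t \<in> mixed_slices n L" "L > 0"
  shows "slice_degree n L t = L ^ n - 1 \<longleftrightarrow> (\<forall>i<n. t (i, 0) = t (i, 1))"
proof -
  let ?d = "\<lambda>i. int (t (i, 0)) - int (t (i, 1))"
  have "int (L ^ n - 1) = int L ^ n - 1"
    using assms(2) by (simp add: of_nat_diff)
  then have "slice_degree n L t = L ^ n - 1 \<longleftrightarrow> int (slice_degree n L t) = int L ^ n - 1"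
    by (metis of_nat_eq_iff)
  also have "\<dots> \<longleftrightarrow> (\<Sum>i<n. ?d i * int L ^ i) = 0"
    unfolding slice_degree_int[OF assms(1)] by simp
  also have "\<dots> \<longleftrightarrow> (\<forall>i<n. ?d i = 0)"
  proof
    have digit_bound: "\<bar>?d i\<bar> < int L" if "i < n" for i
      using mixed_slices_less[OF assms(1) that, of 0] mixed_slices_less[OF assms(1) that, of 1]
      by simp
    assume "(\<Sum>i<n. ?d i * int L ^ i) = 0"
    then show "\<forall>i<n. ?d i = 0"
      using base_digits_eq_zero[of n ?d, OF digit_bound] by blast
  qed simp
  finally show ?thesis by simp
qed

lemma encode_eq_fill_slots:
  "encode sV n L A y
     = fill_slots (\<lambda>_ _. 0) (sliced_slots n)
         (\<lambda>p. \<Sum>s<L. sV (y ^ slot_exponent L p s) (A (fst p) (snd p) s))"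
  by (auto simp: encode_def fill_slots_def sliced_slots_def slot_exponent_def fun_eq_iff
      less_2_cases_iff)

lemma multilinear_encode_expansion:
  fixes sV :: "'a::field \<Rightarrow> 'v::ab_group_add \<Rightarrow> 'v" and sW :: "'a \<Rightarrow> 'w::ab_group_add \<Rightarrow> 'w"
  assumes "vector_space sW" "multilinear2 sV sW n \<Phi>"
  shows "\<Phi> (encode sV n L A y)
           = (\<Sum>t\<in>mixed_slices n L. sW (y ^ slice_degree n L t) (\<Phi> (mixed_slice_args n A t)))"
proof -
  have lin: "Vector_Spaces.linear sV sW (\<lambda>u. \<Phi> (slot_upd args i j u))"
    if "(i, j) \<in> sliced_slots n" for args i j
    using assms(2) that unfolding multilinear2_def sliced_slots_def by auto
  have fill: "fill_slots (\<lambda>_ _. 0) (sliced_slots n) (\<lambda>p. A (fst p) (snd p) (t p)) = mixed_slice_args n A t"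
    for t
    by (auto simp: fill_slots_def mixed_slice_args_def sliced_slots_def fun_eq_iff)
  have "\<Phi> (encode sV n L A y)
          = (\<Sum>t\<in>mixed_slices n L. sW (\<Prod>p\<in>sliced_slots n. y ^ slot_exponent L p (t p))
               (\<Phi> (fill_slots (\<lambda>_ _. 0) (sliced_slots n) (\<lambda>p. A (fst p) (snd p) (t p)))))"
    unfolding encode_eq_fill_slots mixed_slices_def
    by (rule multilinear_expansion[OF assms(1) _ _ lin]) (simp_all add: sliced_slots_def)
  then show ?thesis
    by (simp add: fill slice_degree_def power_sum)
qed

lemma sum_diagonal_mixed_slices:
  "(\<Sum>t\<in>{t\<in>mixed_slices n L. \<forall>i<n. t (i, 0) = t (i, 1)}. g (mixed_slice_args n A t))
     = (\<Sum>s\<in>PiE {..<n} (\<lambda>_. {..<L}). g (sliced_args n A s))"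
proof (rule sum.reindex_bij_witness[of _ "\<lambda>s. restrict (\<lambda>p. s (fst p)) (sliced_slots n)"
                                       "\<lambda>t. restrict (\<lambda>i. t (i, 0)) {..<n}"])
  fix t assume t: "t \<in> {t\<in>mixed_slices n L. \<forall>i<n. t (i, 0) = t (i, 1)}"
  then show "restrict (\<lambda>p. restrict (\<lambda>i. t (i, 0)) {..<n} (fst p)) (sliced_slots n) = t"
    "restrict (\<lambda>i. t (i, 0)) {..<n} \<in> PiE {..<n} (\<lambda>_. {..<L})"
    by (auto simp: mixed_slices_def sliced_slots_def fun_eq_iff PiE_iff extensional_def
        less_2_cases_iff)
  from t have "sliced_args n A (restrict (\<lambda>i. t (i, 0)) {..<n}) = mixed_slice_args n A t"
    by (auto simp: sliced_args_def mixed_slice_args_def fun_eq_iff less_2_cases_iff)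
  then show "g (sliced_args n A (restrict (\<lambda>i. t (i, 0)) {..<n})) = g (mixed_slice_args n A t)"
    by simp
next
  fix s assume "s \<in> PiE {..<n} (\<lambda>_. {..<L})"
  then show "restrict (\<lambda>i. restrict (\<lambda>p. s (fst p)) (sliced_slots n) (i, 0)) {..<n} = s"
    "restrict (\<lambda>p. s (fst p)) (sliced_slots n) \<in> {t\<in>mixed_slices n L. \<forall>i<n. t (i, 0) = t (i, 1)}"
    by (auto simp: mixed_slices_def sliced_slots_def fun_eq_iff PiE_iff extensional_def)
qed

lemma sigma_final_decoding:
  fixes sV :: "'a::field \<Rightarrow> 'v::ab_group_add \<Rightarrow> 'v" and sW :: "'a \<Rightarrow> 'w::ab_group_add \<Rightarrow> 'w"
    and x :: "'i \<Rightarrow> 'a"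
  assumes "vector_space sW" "multilinear2 sV sW n \<Phi>" "L > 0"
    and "finite S" "inj_on x S" "card S = 2 * L ^ n - 1"
  shows "sigma_final n L \<Phi> A
           = (\<Sum>k\<in>S. sW (coeff (lagrange_basis x S k) (L ^ n - 1)) (\<Phi> (encode sV n L A (x k))))"
proof -
  let ?M = "mixed_slices n L"
  have deg_less: "slice_degree n L t < card S" if "t \<in> ?M" for t
  proof -
    have "L ^ n > 0"
      using assms(3) by simp
    then show ?thesis
      using slice_degree_le[OF that assms(3)] assms(6) by linarith
  qed
  have "(\<Sum>k\<in>S. sW (coeff (lagrange_basis x S k) (L ^ n - 1)) (\<Phi> (encode sV n L A (x k))))
          = (\<Sum>t\<in>{t\<in>?M. slice_degree n L t = L ^ n - 1}. \<Phi> (mixed_slice_args n A t))"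
    unfolding multilinear_encode_expansion[OF assms(1,2)]
    by (rule lagrange_extract_coeff[OF assms(1,4,5) _ deg_less])
       (simp add: mixed_slices_def sliced_slots_def finite_PiE)
  also have "{t\<in>?M. slice_degree n L t = L ^ n - 1} = {t\<in>?M. \<forall>i<n. t (i, 0) = t (i, 1)}"
    using slice_degree_eq_iff[OF _ assms(3)] by blast
  finally show ?thesis
    unfolding sum_diagonal_mixed_slices sigma_final_def ..
qed

lemma obtain_surviving_workers:
  assumes "F \<subseteq> {..<f + m}" "card F \<le> f"
  obtains S where "S \<subseteq> {..<f + m} - F" "card S = m" "finite S"
proof -
  have "card ({..<f + m} - F) = f + m - card F"
    using assms(1) finite_subset[OF assms(1)] by (simp add: card_Diff_subset)
  then have "m \<le> card ({..<f + m} - F)"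
    using assms(2) by linarith
  then show ?thesis
    using obtain_subset_with_card_n that by blast
qed

lemma gain_eq:
  assumes "N \<ge> 1"
  shows "gain N f (f + 2 * N - 1) = (int N - 1) * (int f - 1)"
  using assms by (simp add: gain_def of_nat_diff algebra_simps)

theorem corollary1:
  fixes sV :: "'a::field \<Rightarrow> 'v::ab_group_add \<Rightarrow> 'v"
    and sW :: "'a \<Rightarrow> 'w::ab_group_add \<Rightarrow> 'w"
    and n L f :: nat
  assumes "infinite (UNIV :: 'a set)"
    and "vector_space sV" and "vector_space sW"
    and "L > 2"
  shows "(\<forall>x :: nat \<Rightarrow> 'a. inj_on x {..<f + 2 * L ^ n - 1} \<longrightarrow>
           (\<forall>F. F \<subseteq> {..<f + 2 * L ^ n - 1} \<and> card F \<le> f \<longrightarrow>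
             (\<exists>dec :: (nat \<Rightarrow> 'w) \<Rightarrow> 'w.
               \<forall>(\<Phi> :: (nat \<Rightarrow> nat \<Rightarrow> 'v) \<Rightarrow> 'w) (A :: nat \<Rightarrow> nat \<Rightarrow> nat \<Rightarrow> 'v).
                 multilinear2 sV sW n \<Phi> \<longrightarrow>
                 sigma_final n L \<Phi> A =
                   dec (\<lambda>k. if k \<in> {..<f + 2 * L ^ n - 1} - F
                             then \<Phi> (encode sV n L A (x k)) else 0))))
       \<and> gain (L ^ n) f (f + 2 * L ^ n - 1) = (int L ^ n - 1) * (int f - 1)"
proof (intro conjI allI impI)
  have "L > 0" "L ^ n \<ge> 1"
    using assms(4) by simp_all
  then have R: "f + 2 * L ^ n - 1 = f + (2 * L ^ n - 1)"
    by simp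
  fix x :: "nat \<Rightarrow> 'a" and F
  assume inj: "inj_on x {..<f + 2 * L ^ n - 1}" and F: "F \<subseteq> {..<f + 2 * L ^ n - 1} \<and> card F \<le> f"
  obtain S where S: "S \<subseteq> {..<f + 2 * L ^ n - 1} - F" "card S = 2 * L ^ n - 1" "finite S"
    using obtain_surviving_workers[of F f "2 * L ^ n - 1"] F unfolding R by blast
  let ?dec = "\<lambda>v. \<Sum>k\<in>S. sW (coeff (lagrange_basis x S k) (L ^ n - 1)) (v k)"
  have "sigma_final n L \<Phi> A = ?dec (\<lambda>k. \<Phi> (encode sV n L A (x k)))"
    if "multilinear2 sV sW n \<Phi>" for \<Phi> :: "(nat \<Rightarrow> nat \<Rightarrow> 'v) \<Rightarrow> 'w" and A
    using inj_on_subset[OF inj] S by (intro sigma_final_decoding[OF assms(3) that \<open>L > 0\<close>]) auto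
  moreover have "?dec (\<lambda>k. \<Phi> (encode sV n L A (x k)))
      = ?dec (\<lambda>k. if k \<in> {..<f + 2 * L ^ n - 1} - F then \<Phi> (encode sV n L A (x k)) else 0)"
    for \<Phi> :: "(nat \<Rightarrow> nat \<Rightarrow> 'v) \<Rightarrow> 'w" and A
    using S(1) by (intro sum.cong) auto
  ultimately show "\<exists>dec. \<forall>\<Phi> A. multilinear2 sV sW n \<Phi> \<longrightarrow> sigma_final n L \<Phi> A
      = dec (\<lambda>k. if k \<in> {..<f + 2 * L ^ n - 1} - F then \<Phi> (encode sV n L A (x k)) else 0)"
    by (intro exI[of _ ?dec]) simp
next
  show "gain (L ^ n) f (f + 2 * L ^ n - 1) = (int L ^ n - 1) * (int f - 1)"
    using gain_eq[of "L ^ n" f] assms(4) by simp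
qed

end
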